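(* Let $n\in\mathbb{N}$. Two points $A,B\in\mathbb{Q}\cup\{\infty\}$ are neighbours in both $\mathcal{F}$ and $\frac1n\mathcal{F}$ if and only if they can be written in reduced form as $A=\frac{a}{n_1c}$ and $B=\frac{b}{n_2d}$ with $n=n_1n_2$ and $|an_2d-bn_1c|=1$.
   Context: The Farey tessellation $\mathcal{F}$ is the ideal triangulation of the upper half-plane $\mathbb{H}$ whose vertex set is $\mathbb{Q}\cup\{\infty\}$ (with $\infty=\frac10$) and in which two vertices written in reduced form $\frac pq,\frac rs$ are joined by a geodesic edge (are \emph{neighbours} in $\mathcal{F}$) iff $|ps-qr|=1$. $\frac1n\mathcal{F}$ is the image of $\mathcal{F}$ under the isometry $z\mapsto z/n$; thus $A,B$ are neighbours in $\frac1n\mathcal{F}$ iff $nA,nB$ are neighbours in $\mathcal{F}$. *)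

theory Defs
  imports Complex_Main
begin

text \<open>Points of Q \<union> {\<infinity>} are modelled as rat option; None is \<infinity> = 1/0.\<close>
type_synonym qpoint = "rat option"

fun reduced_form :: "qpoint \<Rightarrow> int \<times> int" where
  "reduced_form None = (1, 0)"
| "reduced_form (Some x) = quotient_of x"

definition is_reduced_rep :: "qpoint \<Rightarrow> int \<Rightarrow> int \<Rightarrow> bool" where
  "is_reduced_rep A p q \<longleftrightarrow> coprime p q \<and>
     (case A of None \<Rightarrow> q = 0 | Some x \<Rightarrow> q \<noteq> 0 \<and> x = of_int p / of_int q)"

definition farey_nbr :: "qpoint \<Rightarrow> qpoint \<Rightarrow> bool" where
  "farey_nbr A B \<longleftrightarrow>
     (let (p, q) = reduced_form A; (r, s) = reduced_form B in \<bar>p * s - q * r\<bar> = 1)"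

fun scale_pt :: "nat \<Rightarrow> qpoint \<Rightarrow> qpoint" where
  "scale_pt n None = None"
| "scale_pt n (Some x) = Some (of_nat n * x)"

text \<open>Neighbours in (1/n)F: nA and nB are neighbours in F.\<close>
definition farey_nbr_scaled :: "nat \<Rightarrow> qpoint \<Rightarrow> qpoint \<Rightarrow> bool" where
  "farey_nbr_scaled n A B \<longleftrightarrow> farey_nbr (scale_pt n A) (scale_pt n B)"

end

theory Submission
  imports Defs
begin

(*
  Write A = p/q and B = r/s in reduced form and put g1 = gcd(n, q), g2 = gcd(n, s).
  Then nA and nB have the reduced forms (n/g1) p / (q/g1) and (n/g2) r / (s/g2), whose
  determinant is n/(g1 g2) times the determinant p s - q r of A, B. If both determinants
  are +-1, this forces g1 g2 = n, giving the splitting n = n1 n2 with q = n1 c, s = n2 d.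
  Conversely, |a n2 d - b n1 c| = 1 makes n2 a coprime to c and n1 b coprime to d, so these
  are reduced forms of nA and nB, again with determinant +-1.
*)

lemma is_reduced_rep_reduced_form:
  "is_reduced_rep A (fst (reduced_form A)) (snd (reduced_form A))"
proof (cases A)
  case None
  then show ?thesis by (simp add: is_reduced_rep_def)
next
  case (Some x)
  obtain p q where pq: "quotient_of x = (p, q)" by (cases "quotient_of x")
  then show ?thesis
    using Some quotient_of_div[OF pq] quotient_of_denom_pos[OF pq] quotient_of_coprime[OF pq]
    by (simp add: is_reduced_rep_def)
qed

lemma is_reduced_rep_unique:
  assumes "is_reduced_rep A p q" "is_reduced_rep A p' q'"
  shows "(p' = p \<and> q' = q) \<or> (p' = - p \<and> q' = - q)"
proof (cases A)
  case None
  then have "q = 0" "q' = 0" "\<bar>p\<bar> = 1" "\<bar>p'\<bar> = 1"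
    using assms by (auto simp: is_reduced_rep_def)
  then show ?thesis by arith
next
  case (Some x)
  then have cop: "coprime p q" "coprime p' q'" and nz: "q \<noteq> 0" "q' \<noteq> 0"
    and "(of_int p :: rat) / of_int q = of_int p' / of_int q'"
    using assms by (auto simp: is_reduced_rep_def)
  then have "(of_int (p * q') :: rat) = of_int (p' * q)"
    by (simp add: field_simps)
  then have cross: "p * q' = p' * q"
    by (simp only: of_int_eq_iff)
  have "q dvd q'"
    using cop(1) cross by (metis coprime_commute coprime_dvd_mult_right_iff dvd_triv_right)
  moreover have "q' dvd q"
    using cop(2) cross by (metis coprime_commute coprime_dvd_mult_right_iff dvd_triv_right)
  ultimately have "q' = q \<or> q' = - q"
    using zdvd_antisym_abs by fastforce
  moreover have "q' = - q \<Longrightarrow> (p' + p) * q = 0"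
    using cross by (simp add: algebra_simps)
  ultimately show ?thesis
    using cross nz by auto
qed

lemma farey_nbr_iff_reduced_reps:
  assumes "is_reduced_rep A p q" "is_reduced_rep B r s"
  shows "farey_nbr A B \<longleftrightarrow> \<bar>p * s - q * r\<bar> = 1"
proof -
  obtain p0 q0 where a: "reduced_form A = (p0, q0)" by (cases "reduced_form A")
  obtain r0 s0 where b: "reduced_form B = (r0, s0)" by (cases "reduced_form B")
  have "is_reduced_rep A p0 q0" "is_reduced_rep B r0 s0"
    using is_reduced_rep_reduced_form[of A] is_reduced_rep_reduced_form[of B] a b by simp_all
  from is_reduced_rep_unique[OF this(1) assms(1)] is_reduced_rep_unique[OF this(2) assms(2)]
  have "\<bar>p0 * s0 - q0 * r0\<bar> = \<bar>p * s - q * r\<bar>"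
    by (elim disjE conjE) simp_all
  then show ?thesis
    using a b by (simp add: farey_nbr_def)
qed

lemma is_reduced_rep_scale_pt:
  assumes "is_reduced_rep A p (k * c)" "int n = k * m" "coprime (m * p) c" "k \<noteq> 0"
  shows "is_reduced_rep (scale_pt n A) (m * p) c"
proof (cases A)
  case None
  then show ?thesis using assms by (auto simp: is_reduced_rep_def)
next
  case (Some x)
  then have "c \<noteq> 0" "x = of_int p / (of_int k * of_int c)"
    using assms(1) by (auto simp: is_reduced_rep_def)
  moreover have "(of_nat n :: rat) = of_int k * of_int m"
    using assms(2) by (metis of_int_mult of_int_of_nat_eq)
  ultimately have "of_nat n * x = (of_int (m * p) :: rat) / of_int c"
    using assms(4) by (simp add: field_simps)
  then show ?thesis
    using Some \<open>c \<noteq> 0\<close> assms(3) by (simp add: is_reduced_rep_def)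
qed

lemma is_reduced_rep_scale_pt_gcd:
  assumes "is_reduced_rep A p q" "n > 0"
  defines "g \<equiv> gcd (int n) q"
  shows "is_reduced_rep (scale_pt n A) (int n div g * p) (q div g)"
proof (rule is_reduced_rep_scale_pt)
  have q: "q = g * (q div g)" and "int n = g * (int n div g)"
    unfolding g_def by simp_all
  then show "is_reduced_rep A p (g * (q div g))" "int n = g * (int n div g)"
    using assms(1) by simp_all
  have "coprime p q" using assms(1) by (simp add: is_reduced_rep_def)
  then have "coprime p (q div g)"
    using q by (metis coprime_mult_right_iff)
  moreover have "coprime (int n div g) (q div g)"
    using assms(2) by (simp add: g_def div_gcd_coprime)
  ultimately show "coprime (int n div g * p) (q div g)" by simp
  show "g \<noteq> 0" using assms(2) g_def by simp
qed

lemma gcd_mult_gcd_eq_if_farey_nbr_scaled: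
  assumes A: "is_reduced_rep A p q" and B: "is_reduced_rep B r s" and "n > 0"
    and "farey_nbr A B" "farey_nbr_scaled n A B"
  shows "gcd (int n) q * gcd (int n) s = int n"
proof -
  define g1 g2 where "g1 = gcd (int n) q" and "g2 = gcd (int n) s"
  have det: "\<bar>p * s - q * r\<bar> = 1"
    using assms farey_nbr_iff_reduced_reps by blast
  have det_scaled: "\<bar>(int n div g1 * p) * (s div g2) - (q div g1) * (int n div g2 * r)\<bar> = 1"
    using assms farey_nbr_iff_reduced_reps[OF is_reduced_rep_scale_pt_gcd is_reduced_rep_scale_pt_gcd]
    unfolding farey_nbr_scaled_def g1_def g2_def by blast
  have "g1 * g2 * ((int n div g1 * p) * (s div g2) - (q div g1) * (int n div g2 * r))
      = (g1 * (int n div g1)) * p * (g2 * (s div g2)) - (g1 * (q div g1)) * (g2 * (int n div g2)) * r"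
    by (simp add: algebra_simps)
  also have "\<dots> = int n * (p * s - q * r)"
    by (simp add: g1_def g2_def algebra_simps)
  finally have "\<bar>g1 * g2\<bar> = \<bar>int n\<bar>"
    using det det_scaled by (metis abs_mult mult.right_neutral)
  then show ?thesis
    using \<open>n > 0\<close> by (simp add: g1_def g2_def abs_mult)
qed

lemma coprime_if_abs_diff_eq_1:
  fixes u v x y :: int
  assumes "\<bar>x * u - y * v\<bar> = 1"
  shows "coprime u v"
proof (rule coprimeI)
  fix k assume "k dvd u" "k dvd v"
  then have "k dvd \<bar>x * u - y * v\<bar>" by simp
  then show "is_unit k" using assms by simp
qed

lemma farey_nbr_scaled_if_split:
  assumes A: "is_reduced_rep A a (int n1 * c)" and B: "is_reduced_rep B b (int n2 * d)"
    and det: "\<bar>a * int n2 * d - b * int n1 * c\<bar> = 1" and "n = n1 * n2" "n > 0"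
  shows "farey_nbr_scaled n A B"
proof -
  have "coprime (int n2) c"
    using coprime_if_abs_diff_eq_1[of "a * d" "int n2" "b * int n1" c] det by (simp add: ac_simps)
  moreover have "coprime (int n1) d"
    using coprime_if_abs_diff_eq_1[of "- (b * c)" "int n1" "- (a * int n2)" d] det
    by (simp add: ac_simps)
  moreover have "coprime a c" "coprime b d"
    using A B by (simp_all add: is_reduced_rep_def)
  ultimately have "is_reduced_rep (scale_pt n A) (int n2 * a) c"
    "is_reduced_rep (scale_pt n B) (int n1 * b) d"
    using is_reduced_rep_scale_pt[OF A, of n "int n2"] is_reduced_rep_scale_pt[OF B, of n "int n1"]
      \<open>n = n1 * n2\<close> \<open>n > 0\<close>
    by simp_all
  then show ?thesis
    unfolding farey_nbr_scaled_def using farey_nbr_iff_reduced_reps det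
    by (simp add: algebra_simps)
qed

theorem lemma3p7:
  fixes n :: nat and A B :: qpoint
  assumes "n \<ge> 1"
  shows "(farey_nbr A B \<and> farey_nbr_scaled n A B) \<longleftrightarrow>
    (\<exists>(n1::nat) (n2::nat) (a::int) (b::int) (c::int) (d::int).
        n = n1 * n2 \<and>
        is_reduced_rep A a (int n1 * c) \<and>
        is_reduced_rep B b (int n2 * d) \<and>
        \<bar>a * int n2 * d - b * int n1 * c\<bar> = 1)"
proof
  assume nbr: "farey_nbr A B \<and> farey_nbr_scaled n A B"
  obtain p q r s where A: "is_reduced_rep A p q" and B: "is_reduced_rep B r s"
    using is_reduced_rep_reduced_form by blast
  define n1 n2 where "n1 = nat (gcd (int n) q)" and "n2 = nat (gcd (int n) s)"
  have "int n1 * int n2 = int n"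
    using gcd_mult_gcd_eq_if_farey_nbr_scaled[OF A B] nbr assms by (simp add: n1_def n2_def)
  then have "n = n1 * n2"
    by (simp only: of_nat_mult[symmetric] of_nat_eq_iff)
  moreover have "is_reduced_rep A p (int n1 * (q div int n1))"
    "is_reduced_rep B r (int n2 * (s div int n2))"
    using A B by (simp_all add: n1_def n2_def)
  moreover have "p * int n2 * (s div int n2) - r * int n1 * (q div int n1) = p * s - r * q"
    by (simp only: mult.assoc) (simp add: n1_def n2_def)
  then have "\<bar>p * int n2 * (s div int n2) - r * int n1 * (q div int n1)\<bar> = 1"
    using nbr farey_nbr_iff_reduced_reps[OF A B] by (simp add: mult.commute)
  ultimately show "\<exists>n1 n2 a b c d. n = n1 * n2 \<and> is_reduced_rep A a (int n1 * c) \<and>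
      is_reduced_rep B b (int n2 * d) \<and> \<bar>a * int n2 * d - b * int n1 * c\<bar> = 1"
    by blast
next
  assume "\<exists>n1 n2 a b c d. n = n1 * n2 \<and> is_reduced_rep A a (int n1 * c) \<and>
      is_reduced_rep B b (int n2 * d) \<and> \<bar>a * int n2 * d - b * int n1 * c\<bar> = 1"
  then obtain n1 n2 a b c d where "n = n1 * n2" and A: "is_reduced_rep A a (int n1 * c)"
    and B: "is_reduced_rep B b (int n2 * d)" and det: "\<bar>a * int n2 * d - b * int n1 * c\<bar> = 1"
    by blast
  moreover have "\<bar>a * (int n2 * d) - int n1 * c * b\<bar> = 1"
    using det by (simp add: ac_simps)
  ultimately show "farey_nbr A B \<and> farey_nbr_scaled n A B"
    using farey_nbr_iff_reduced_reps[OF A B] farey_nbr_scaled_if_split assms by simp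
qed

end
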